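(* There is an absolute constant $C>0$ such that the following holds. Let $n,N,m,\sigma\in\mathbb{N}$ and $\delta\in(0,1)$, and let $\vec{F}\in\mathbb{C}^{n\times n}$ be the unitary discrete Fourier matrix. For each $i\in[N]$, let $\vec{B}_i\in\mathbb{C}^{m\times n}$ be formed by sampling $m$ rows of $\vec{F}$ uniformly and independently at random, multiplying each sampled row by an independent uniformly random sign, and rescaling the rows by $m^{-1/2}$; the matrices $\vec{B}_1,\dots,\vec{B}_N$ are mutually independent. If $$m\ge C\,\sigma\,\delta^{-2}\log(n)^4\log(N),$$ then with probability at least $1-n^{-\log(n)^3}$ the collection $(\vec{B}_i)_{i\in[N]}$ is pairwise $(\delta,\sigma)$-incoherent.
   Context: $[N]=\{1,\dots,N\}$; $\langle\cdot,\cdot\rangle$ and $\|\cdot\|$ denote the Euclidean inner product and norm, and $|\vec{v}|_0$ the number of nonzero entries of $\vec{v}$. A collection of matrices $\vec{B}_i\in\mathbb{K}^{m\times n_i}$, $i\in[N]$, is pairwise $(\delta,\sigma)$-incoherent (with $\sigma=(\sigma_1,\dots,\sigma_N)$, or a single number $\sigma$ meaning $\sigma_i=\sigma$ for all $i$) if for all $i\ne j$, $$\sup\{|\langle\vec{B}_i\vec{v}_i,\vec{B}_j\vec{v}_j\rangle| : |\vec{v}_i|_0\le\sigma_i,\ |\vec{v}_j|_0\le\sigma_j,\ \|\vec{v}_i\|=\|\vec{v}_j\|=1\}\le\delta.$$ *)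

theory Defs
  imports "HOL-Analysis.Analysis" "HOL-Probability.Product_PMF"
begin

text \<open>Matrices are functions nat => nat => complex with explicit dimensions;
  rows and columns are indexed from 0.  Vectors in K^d are functions nat => complex
  supported on {0..<d}.\<close>

definition vec_space :: "nat \<Rightarrow> (nat \<Rightarrow> complex) set" where
  "vec_space d = {v. \<forall>j. j \<ge> d \<longrightarrow> v j = 0}"

definition l0 :: "nat \<Rightarrow> (nat \<Rightarrow> complex) \<Rightarrow> nat" where
  "l0 d v = card {j \<in> {0..<d}. v j \<noteq> 0}"

definition cnorm :: "nat \<Rightarrow> (nat \<Rightarrow> complex) \<Rightarrow> real" where
  "cnorm d v = sqrt (\<Sum>j<d. (cmod (v j))\<^sup>2)"

definition cinner :: "nat \<Rightarrow> (nat \<Rightarrow> complex) \<Rightarrow> (nat \<Rightarrow> complex) \<Rightarrow> complex" where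
  "cinner d x y = (\<Sum>k<d. x k * cnj (y k))"

definition mat_vec :: "nat \<Rightarrow> (nat \<Rightarrow> nat \<Rightarrow> complex) \<Rightarrow> (nat \<Rightarrow> complex) \<Rightarrow> (nat \<Rightarrow> complex)" where
  "mat_vec d B v = (\<lambda>k. \<Sum>j<d. B k j * v j)"

text \<open>Pairwise (delta, sigma)-incoherence of B_0,...,B_{N-1}, with B_i an m x ns i matrix.
  The supremum bound is unfolded: every admissible value is at most delta.\<close>
definition pairwise_incoherent ::
  "nat \<Rightarrow> nat \<Rightarrow> (nat \<Rightarrow> nat) \<Rightarrow> (nat \<Rightarrow> nat \<Rightarrow> nat \<Rightarrow> complex) \<Rightarrow> real \<Rightarrow> (nat \<Rightarrow> nat) \<Rightarrow> bool" where
  "pairwise_incoherent N m ns B \<delta> \<sigma> \<longleftrightarrow>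
     (\<forall>i<N. \<forall>j<N. i \<noteq> j \<longrightarrow>
        (\<forall>vi \<in> vec_space (ns i). \<forall>vj \<in> vec_space (ns j).
           l0 (ns i) vi \<le> \<sigma> i \<longrightarrow> l0 (ns j) vj \<le> \<sigma> j \<longrightarrow>
           cnorm (ns i) vi = 1 \<longrightarrow> cnorm (ns j) vj = 1 \<longrightarrow>
           cmod (cinner m (mat_vec (ns i) (B i) vi) (mat_vec (ns j) (B j) vj)) \<le> \<delta>))"

definition dft :: "nat \<Rightarrow> nat \<Rightarrow> nat \<Rightarrow> complex" where
  "dft n j k = exp (- 2 * pi * \<i> * of_nat (j * k) / of_nat n) / complex_of_real (sqrt (real n))"

text \<open>Random outcome: omega (i,k) = (row index of F sampled for row k of B_i, sign (True = +1)).\<close>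
definition sample_space :: "nat \<Rightarrow> nat \<Rightarrow> nat \<Rightarrow> (nat \<times> nat \<Rightarrow> nat \<times> bool) pmf" where
  "sample_space n N m =
     Pi_pmf ({0..<N} \<times> {0..<m}) (0, True) (\<lambda>_. pmf_of_set ({0..<n} \<times> UNIV))"

definition subsampled_dft ::
  "nat \<Rightarrow> nat \<Rightarrow> (nat \<times> nat \<Rightarrow> nat \<times> bool) \<Rightarrow> nat \<Rightarrow> nat \<Rightarrow> nat \<Rightarrow> complex" where
  "subsampled_dft n m \<omega> i k j =
     (if snd (\<omega> (i, k)) then 1 else -1) / complex_of_real (sqrt (real m)) * dft n (fst (\<omega> (i, k))) j"

end

theory Submission
  imports Defs "HOL-Probability.Hoeffding"
begin

text \<open>Expanding the inner product reduces incoherence of \<open>\<sigma>\<close>-sparse unit vectors to a bound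
  \<open>t\<close> on the entries of the cross Gram matrices \<open>B\<^sub>i\<^sup>* B\<^sub>j\<close>, since such vectors have \<open>\<ell>\<^sub>1\<close>-norm at
  most \<open>\<surd>\<sigma>\<close>; it suffices to take \<open>t = \<delta>/\<sigma>\<close>. For \<open>i \<noteq> j\<close> each entry is a sum of \<open>m\<close>
  independent terms of modulus \<open>1/(m n)\<close>, and flipping the random sign of a row of \<open>B\<^sub>i\<close>
  negates its term while preserving the distribution, so the terms are centred. Hoeffding's
  inequality for real and imaginary parts bounds the probability of a large entry by
  \<open>4 exp (-t\<^sup>2 m n\<^sup>2/8)\<close>. After a union bound over the \<open>N\<^sup>2 n\<^sup>2\<close> entries, the factor \<open>n\<^sup>2\<close> in
  the exponent together with \<open>\<sigma> \<le> n\<close> makes the required number of rows linear in \<open>\<sigma>\<close>.\<close>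

subsection \<open>Incoherence from bounded cross Gram entries\<close>

lemma pairwise_incoherent_zero_sparsity: "pairwise_incoherent N m ns B \<delta> (\<lambda>_. 0)"
proof -
  have "cnorm d v = 0" if "l0 d v \<le> 0" for d v
  proof -
    have "{j \<in> {0..<d}. v j \<noteq> 0} = {}" using that by (simp add: l0_def)
    then show ?thesis by (auto simp: cnorm_def)
  qed
  then show ?thesis by (fastforce simp: pairwise_incoherent_def)
qed

lemma sum_cmod_le_sqrt_sparsity:
  assumes "l0 n v \<le> \<sigma>" and "cnorm n v = 1"
  shows "(\<Sum>a<n. cmod (v a)) \<le> sqrt (real (min \<sigma> n))"
proof -
  define S where "S = {j \<in> {0..<n}. v j \<noteq> 0}"
  have card_S: "card S \<le> min \<sigma> n"
  proof -
    have "card S \<le> card {0..<n}" by (rule card_mono) (auto simp: S_def)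
    then show ?thesis using assms(1) by (simp add: l0_def S_def)
  qed
  have sum_sq: "(\<Sum>a\<in>S. (cmod (v a))\<^sup>2) = 1"
  proof -
    have "(\<Sum>a<n. (cmod (v a))\<^sup>2) = 1"
      using assms(2) unfolding cnorm_def by (metis real_sqrt_eq_1_iff)
    then show ?thesis by (subst (asm) sum.mono_neutral_right[of _ S]) (auto simp: S_def)
  qed
  have "(\<Sum>a<n. cmod (v a)) = (\<Sum>a\<in>S. cmod (v a))"
    by (rule sum.mono_neutral_right) (auto simp: S_def)
  then have "(\<Sum>a<n. cmod (v a))\<^sup>2 \<le> (\<Sum>a\<in>S. 1\<^sup>2) * (\<Sum>a\<in>S. (cmod (v a))\<^sup>2)"
    using Cauchy_Schwarz_ineq_sum[of "\<lambda>_. 1" "\<lambda>a. cmod (v a)" S] by simp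
  also have "\<dots> \<le> real (min \<sigma> n)" using card_S by (simp add: sum_sq)
  finally show ?thesis by (rule real_le_rsqrt)
qed

definition cross_gram ::
  "nat \<Rightarrow> (nat \<Rightarrow> nat \<Rightarrow> nat \<Rightarrow> complex) \<Rightarrow> nat \<Rightarrow> nat \<Rightarrow> nat \<Rightarrow> nat \<Rightarrow> complex" where
  "cross_gram m B i j a b = (\<Sum>k<m. B i k a * cnj (B j k b))"

lemma cinner_mat_vec_eq_cross_gram:
  "cinner m (mat_vec n (B i) x) (mat_vec n (B j) y) =
     (\<Sum>a<n. \<Sum>b<n. x a * cnj (y b) * cross_gram m B i j a b)"
proof -
  have "cinner m (mat_vec n (B i) x) (mat_vec n (B j) y) =
      (\<Sum>k<m. \<Sum>a<n. \<Sum>b<n. B i k a * x a * cnj (B j k b * y b))"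
    unfolding cinner_def mat_vec_def
    by (simp add: cnj_sum sum_distrib_left sum_distrib_right) (rule sum.cong[OF refl], rule sum.swap)
  also have "\<dots> = (\<Sum>a<n. \<Sum>b<n. \<Sum>k<m. B i k a * x a * cnj (B j k b * y b))"
    by (subst sum.swap) (simp add: sum.swap[of _ "{..<m}"])
  finally show ?thesis by (simp add: cross_gram_def sum_distrib_left mult_ac)
qed

lemma pairwise_incoherent_if_cross_gram_le:
  assumes entries: "\<And>i j a b. i < N \<Longrightarrow> j < N \<Longrightarrow> i \<noteq> j \<Longrightarrow> a < n \<Longrightarrow> b < n \<Longrightarrow>
      cmod (cross_gram m B i j a b) \<le> t"
    and "t \<ge> 0" and "t * real (min \<sigma> n) \<le> \<delta>"
  shows "pairwise_incoherent N m (\<lambda>_. n) B \<delta> (\<lambda>_. \<sigma>)"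
  unfolding pairwise_incoherent_def
proof (intro allI impI ballI)
  fix i j x y assume ij: "i < N" "j < N" "i \<noteq> j"
    and sparse: "l0 n x \<le> \<sigma>" "l0 n y \<le> \<sigma>" and unit: "cnorm n x = 1" "cnorm n y = 1"
  have "cmod (cinner m (mat_vec n (B i) x) (mat_vec n (B j) y))
      \<le> (\<Sum>a<n. \<Sum>b<n. cmod (x a * cnj (y b) * cross_gram m B i j a b))"
    unfolding cinner_mat_vec_eq_cross_gram by (rule order.trans[OF norm_sum sum_mono[OF norm_sum]])
  also have "\<dots> \<le> (\<Sum>a<n. \<Sum>b<n. cmod (x a) * cmod (y b) * t)"
    by (intro sum_mono) (auto simp: norm_mult intro!: mult_left_mono entries ij)
  also have "\<dots> = t * ((\<Sum>a<n. cmod (x a)) * (\<Sum>b<n. cmod (y b)))"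
    by (simp add: sum_distrib_left sum_distrib_right mult_ac) (rule sum.swap)
  also have "\<dots> \<le> t * (sqrt (real (min \<sigma> n)) * sqrt (real (min \<sigma> n)))"
    using sum_cmod_le_sqrt_sparsity[OF sparse(1) unit(1)] sum_cmod_le_sqrt_sparsity[OF sparse(2) unit(2)]
    by (intro mult_left_mono[OF mult_mono]) (auto intro: sum_nonneg assms(2))
  also have "\<dots> \<le> \<delta>" using assms(3) by simp
  finally show "cmod (cinner m (mat_vec n (B i) x) (mat_vec n (B j) y)) \<le> \<delta>" .
qed

subsection \<open>Concentration of a single cross Gram entry\<close>

lemma map_Pi_pmf_update_invariant:
  assumes "finite A" and "x \<in> A" and "map_pmf f (p x) = p x"
  shows "map_pmf (\<lambda>w. w(x := f (w x))) (Pi_pmf A d p) = Pi_pmf A d p"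
proof -
  define R where "R = Pi_pmf (A - {x}) d p"
  have split: "Pi_pmf A d p = map_pmf (\<lambda>(y, w). w(x := y)) (pair_pmf (p x) R)"
  proof -
    have "A = insert x (A - {x})" using assms(2) by auto
    then show ?thesis unfolding R_def
      by (metis Pi_pmf_insert[of "A - {x}" x d p] Diff_iff assms(1) finite_Diff singletonI)
  qed
  have "map_pmf (\<lambda>w. w(x := f (w x))) (Pi_pmf A d p)
      = map_pmf (\<lambda>(y, w). w(x := y)) (map_pmf (apfst f) (pair_pmf (p x) R))"
    unfolding split map_pmf_comp by (intro map_pmf_cong) (auto simp: case_prod_unfold)
  also have "map_pmf (apfst f) (pair_pmf (p x) R) = pair_pmf (p x) R"
    using pair_map_pmf1[of f "p x" R] assms(3) by simp
  finally show ?thesis by (simp only: flip: split)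
qed

definition flip_sign :: "nat \<times> bool \<Rightarrow> nat \<times> bool" where
  "flip_sign u = (fst u, \<not> snd u)"

lemma sample_space_flip_sign_invariant:
  assumes "x \<in> {0..<N} \<times> {0..<m}" and "0 < n"
  shows "map_pmf (\<lambda>w. w(x := flip_sign (w x))) (sample_space n N m) = sample_space n N m"
proof -
  have "inj_on flip_sign ({0..<n} \<times> UNIV)" by (auto simp: inj_on_def flip_sign_def)
  moreover have "flip_sign ` ({0..<n} \<times> UNIV) = {0..<n} \<times> UNIV"
    by (auto simp: flip_sign_def image_iff)
  ultimately have "map_pmf flip_sign (pmf_of_set ({0..<n} \<times> UNIV)) = pmf_of_set ({0..<n} \<times> UNIV)"
    using assms(2) by (simp add: map_pmf_of_set_inj)
  then show ?thesis unfolding sample_space_def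
    by (intro map_Pi_pmf_update_invariant) (use assms(1) in auto)
qed

text \<open>Row \<open>k\<close> of \<open>B\<^sub>i\<close> and row \<open>k\<close> of \<open>B\<^sub>j\<close> depend only on the coordinates \<open>(i,k)\<close> and \<open>(j,k)\<close>,
  so for \<open>i \<noteq> j\<close> the summands are independent; the sign flip of coordinate \<open>(i,k)\<close> shows
  they are centred.\<close>

lemma prob_sum_rows_deviation_le:
  fixes g :: "nat \<times> bool \<Rightarrow> nat \<times> bool \<Rightarrow> real"
  assumes ij: "i < N" "j < N" "i \<noteq> j" and "0 < n" "0 < m" "0 < c"
    and bounded: "\<And>u v. \<bar>g u v\<bar> \<le> c" and odd: "\<And>u v. g (flip_sign u) v = - g u v"
    and "0 \<le> \<epsilon>"
  shows "measure_pmf.prob (sample_space n N m) {w. \<epsilon> \<le> \<bar>\<Sum>k<m. g (w (i, k)) (w (j, k))\<bar>}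
           \<le> 2 * exp (- (\<epsilon>\<^sup>2 / (2 * real m * c\<^sup>2)))"
proof -
  define P where "P = sample_space n N m"
  define X where "X = (\<lambda>k (w::nat \<times> nat \<Rightarrow> nat \<times> bool). g (w (i, k)) (w (j, k)))"
  define K where "K = (\<lambda>k::nat. {(i, k), (j, k)})"
  have "prob_space.indep_vars (measure_pmf P) (\<lambda>_. count_space UNIV) (\<lambda>x f. f x) ({0..<N} \<times> {0..<m})"
    unfolding P_def sample_space_def by (rule indep_vars_Pi_pmf) simp
  then have rows_indep: "prob_space.indep_vars (measure_pmf P) (\<lambda>k. PiM (K k) (\<lambda>_. count_space UNIV))
      (\<lambda>k w. restrict w (K k)) {0..<m}"
    by (rule prob_space.indep_vars_restrict[OF measure_pmf.prob_space_axioms])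
      (auto simp: K_def disjoint_family_on_def ij)
  have meas: "(\<lambda>f. g (f (i, k)) (f (j, k))) \<in> borel_measurable (PiM (K k) (\<lambda>_. count_space UNIV))" for k
  proof (rule measurable_compose_countable[where f = "\<lambda>u f. g u (f (j, k))"])
    show "(\<lambda>f. f (i, k)) \<in> PiM (K k) (\<lambda>_. count_space UNIV) \<rightarrow>\<^sub>M count_space UNIV"
      by (rule measurable_component_singleton) (simp add: K_def)
    show "(\<lambda>f. g u (f (j, k))) \<in> borel_measurable (PiM (K k) (\<lambda>_. count_space UNIV))" for u
      by (rule measurable_compose[OF measurable_component_singleton[where i = "(j, k)"]])
        (auto simp: K_def)
  qed
  have "prob_space.indep_vars (measure_pmf P) (\<lambda>_. borel) X {0..<m}"
    using prob_space.indep_vars_compose2[OF measure_pmf.prob_space_axioms rows_indep meas]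
    by (rule prob_space.indep_vars_cong[OF measure_pmf.prob_space_axioms, THEN iffD1, rotated 3])
      (auto simp: X_def K_def)
  moreover have centred: "measure_pmf.expectation P (X k) = 0" if "k < m" for k
  proof -
    define T where "T = (\<lambda>w::nat \<times> nat \<Rightarrow> nat \<times> bool. w((i, k) := flip_sign (w (i, k))))"
    have "measure_pmf.expectation P (X k) = measure_pmf.expectation (map_pmf T P) (X k)"
      unfolding P_def T_def using sample_space_flip_sign_invariant[of "(i, k)" N m n] ij that assms(4)
      by simp
    also have "\<dots> = - measure_pmf.expectation P (X k)"
      using ij by (simp add: T_def X_def odd)
    finally show ?thesis by simp
  qed
  moreover have "AE w in measure_pmf P. X k w \<in> {-c..c}" for k
    using bounded by (intro AE_pmfI) (simp add: X_def abs_le_iff minus_le_iff)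
  ultimately interpret H: Hoeffding_ineq "measure_pmf P" "{0..<m}" X "\<lambda>_. -c" "\<lambda>_. c" 0
    by unfold_locales (auto simp: centred)
  have "measure_pmf.prob P {w \<in> space (measure_pmf P). \<epsilon> \<le> \<bar>(\<Sum>k\<in>{0..<m}. X k w) - 0\<bar>}
      \<le> 2 * exp (-2 * \<epsilon>\<^sup>2 / (\<Sum>k\<in>{0..<m}. (c - - c)\<^sup>2))"
    by (rule H.Hoeffding_ineq_abs_ge) (use assms(5,6,9) in auto)
  then show ?thesis
    by (simp add: P_def X_def atLeast0LessThan power_mult_distrib mult.assoc)
qed

lemma prob_cmod_sum_rows_gt_le:
  fixes g :: "nat \<times> bool \<Rightarrow> nat \<times> bool \<Rightarrow> complex"
  assumes ij: "i < N" "j < N" "i \<noteq> j" and "0 < n"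
    and bounded: "\<And>u v. cmod (g u v) \<le> c" and odd: "\<And>u v. g (flip_sign u) v = - g u v"
    and "0 \<le> t"
  shows "measure_pmf.prob (sample_space n N m) {w. t < cmod (\<Sum>k<m. g (w (i, k)) (w (j, k)))}
           \<le> 4 * exp (- (t\<^sup>2 / (8 * real m * c\<^sup>2)))"
proof (cases "m = 0 \<or> c = 0")
  case True
  then have "(\<Sum>k<m. g (w (i, k)) (w (j, k))) = 0" for w
    using bounded[of "w (i, _)" "w (j, _)"] by auto
  then show ?thesis using assms(7) by simp
next
  case False
  then have "0 < m" "0 < c" using bounded[of undefined undefined] norm_ge_zero[of "g undefined undefined"]
    by linarith+
  define P where "P = sample_space n N m"
  define part_large where "part_large = (\<lambda>h :: complex \<Rightarrow> real.
    {w. t / 2 \<le> \<bar>\<Sum>k<m. h (g (w (i, k)) (w (j, k)))\<bar>})"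
  have part_bound: "measure_pmf.prob P (part_large h) \<le> 2 * exp (- (t\<^sup>2 / (8 * real m * c\<^sup>2)))"
    if "\<And>z. \<bar>h z\<bar> \<le> cmod z" and "\<And>z. h (- z) = - h z" for h
  proof -
    have "measure_pmf.prob P (part_large h) \<le> 2 * exp (- ((t / 2)\<^sup>2 / (2 * real m * c\<^sup>2)))"
      unfolding P_def part_large_def
      using \<open>0 < m\<close> \<open>0 < c\<close> assms(4,7) that(2)
      by (intro prob_sum_rows_deviation_le[OF ij]) (auto simp: odd intro: order.trans[OF that(1) bounded])
    then show ?thesis by (simp add: power_divide mult.assoc)
  qed
  have "{w. t < cmod (\<Sum>k<m. g (w (i, k)) (w (j, k)))} \<subseteq> part_large Re \<union> part_large Im"
  proof
    fix w assume "w \<in> {w. t < cmod (\<Sum>k<m. g (w (i, k)) (w (j, k)))}"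
    then have "t < cmod (\<Sum>k<m. g (w (i, k)) (w (j, k)))" by simp
    then have "t < \<bar>Re (\<Sum>k<m. g (w (i, k)) (w (j, k)))\<bar> + \<bar>Im (\<Sum>k<m. g (w (i, k)) (w (j, k)))\<bar>"
      using cmod_le by (rule order.strict_trans2)
    then show "w \<in> part_large Re \<union> part_large Im"
      by (simp add: part_large_def Re_sum Im_sum) linarith
  qed
  then have "measure_pmf.prob P {w. t < cmod (\<Sum>k<m. g (w (i, k)) (w (j, k)))}
      \<le> measure_pmf.prob P (part_large Re) + measure_pmf.prob P (part_large Im)"
    by (intro order.trans[OF measure_pmf.finite_measure_mono measure_Un_le]) auto
  also have "\<dots> \<le> 4 * exp (- (t\<^sup>2 / (8 * real m * c\<^sup>2)))"
    using part_bound[of Re] part_bound[of Im] abs_Re_le_cmod abs_Im_le_cmod by simp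
  finally show ?thesis unfolding P_def .
qed

definition sampled_row :: "nat \<Rightarrow> nat \<Rightarrow> nat \<times> bool \<Rightarrow> nat \<Rightarrow> complex" where
  "sampled_row n m u a = (if snd u then 1 else -1) / complex_of_real (sqrt (real m)) * dft n (fst u) a"

lemma subsampled_dft_eq_sampled_row: "subsampled_dft n m \<omega> i k = sampled_row n m (\<omega> (i, k))"
  by (simp add: fun_eq_iff subsampled_dft_def sampled_row_def)

lemma cmod_sampled_row: "cmod (sampled_row n m u a) = 1 / sqrt (real m * real n)"
proof -
  have "cmod (exp (- 2 * pi * \<i> * of_nat (fst u * a) / of_nat n)) = 1"
    by (simp add: norm_exp_eq_Re)
  then show ?thesis by (simp add: sampled_row_def dft_def norm_mult norm_divide real_sqrt_mult)
qed

lemma sampled_row_flip_sign: "sampled_row n m (flip_sign u) a = - sampled_row n m u a"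
  by (simp add: sampled_row_def flip_sign_def)

lemma prob_cross_gram_gt_le:
  assumes "i < N" "j < N" "i \<noteq> j" and "0 < n" and "0 \<le> t"
  shows "measure_pmf.prob (sample_space n N m) {\<omega>. t < cmod (cross_gram m (subsampled_dft n m \<omega>) i j a b)}
           \<le> 4 * exp (- (t\<^sup>2 * real m * (real n)\<^sup>2 / 8))"
proof -
  define c where "c = 1 / (real m * real n)"
  have exponent: "t\<^sup>2 / (8 * real m * c\<^sup>2) = t\<^sup>2 * real m * (real n)\<^sup>2 / 8"
    using assms(4) by (cases "m = 0") (simp_all add: c_def field_simps power2_eq_square)
  have bounded: "cmod (sampled_row n m u a * cnj (sampled_row n m v b)) \<le> c" for u v
    by (simp add: norm_mult cmod_sampled_row c_def flip: real_sqrt_mult)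
  show ?thesis
    unfolding cross_gram_def subsampled_dft_eq_sampled_row exponent[symmetric]
    by (rule prob_cmod_sum_rows_gt_le[OF assms(1-4) bounded _ assms(5)])
      (simp add: sampled_row_flip_sign)
qed

lemma prob_pairwise_incoherent_subsampled_dft_ge:
  assumes "0 < n" and "0 \<le> t" and "t * real (min \<sigma> n) \<le> \<delta>"
  shows "measure_pmf.prob (sample_space n N m)
           {\<omega>. pairwise_incoherent N m (\<lambda>_. n) (subsampled_dft n m \<omega>) \<delta> (\<lambda>_. \<sigma>)}
         \<ge> 1 - 4 * (real N * real n)\<^sup>2 * exp (- (t\<^sup>2 * real m * (real n)\<^sup>2 / 8))"
proof -
  define P where "P = sample_space n N m"
  define I where "I = {..<N} \<times> {..<N} \<times> {..<n} \<times> {..<n}"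
  define Large where "Large = (\<lambda>(i, j, a, b).
    {\<omega>. i \<noteq> j \<and> t < cmod (cross_gram m (subsampled_dft n m \<omega>) i j a b)})"
  have "measure_pmf.prob P (\<Union>x\<in>I. Large x) \<le> (\<Sum>x\<in>I. measure_pmf.prob P (Large x))"
    by (rule measure_pmf.finite_measure_subadditive_finite) (auto simp: I_def)
  also have "\<dots> \<le> (\<Sum>x\<in>I. 4 * exp (- (t\<^sup>2 * real m * (real n)\<^sup>2 / 8)))"
  proof (rule sum_mono)
    fix x assume "x \<in> I"
    then obtain i j a b where x: "x = (i, j, a, b)" "i < N" "j < N" by (auto simp: I_def)
    show "measure_pmf.prob P (Large x) \<le> 4 * exp (- (t\<^sup>2 * real m * (real n)\<^sup>2 / 8))"
    proof (cases "i = j")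
      case False
      then show ?thesis
        using prob_cross_gram_gt_le[OF x(2,3) False assms(1,2)] by (simp add: x Large_def P_def)
    qed (simp add: x Large_def)
  qed
  also have "\<dots> = 4 * (real N * real n)\<^sup>2 * exp (- (t\<^sup>2 * real m * (real n)\<^sup>2 / 8))"
    by (simp add: I_def card_cartesian_product power2_eq_square)
  finally have bad: "measure_pmf.prob P (\<Union>x\<in>I. Large x)
      \<le> 4 * (real N * real n)\<^sup>2 * exp (- (t\<^sup>2 * real m * (real n)\<^sup>2 / 8))" .
  have "- (\<Union>x\<in>I. Large x) \<subseteq>
      {\<omega>. pairwise_incoherent N m (\<lambda>_. n) (subsampled_dft n m \<omega>) \<delta> (\<lambda>_. \<sigma>)}"
  proof
    fix \<omega> assume "\<omega> \<in> - (\<Union>x\<in>I. Large x)"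
    then have "cmod (cross_gram m (subsampled_dft n m \<omega>) i j a b) \<le> t"
      if "i < N" "j < N" "i \<noteq> j" "a < n" "b < n" for i j a b
      using that by (force simp: I_def Large_def)
    then show "\<omega> \<in> {\<omega>. pairwise_incoherent N m (\<lambda>_. n) (subsampled_dft n m \<omega>) \<delta> (\<lambda>_. \<sigma>)}"
      using pairwise_incoherent_if_cross_gram_le assms(2,3) by blast
  qed
  then have "measure_pmf.prob P (- (\<Union>x\<in>I. Large x)) \<le>
      measure_pmf.prob P {\<omega>. pairwise_incoherent N m (\<lambda>_. n) (subsampled_dft n m \<omega>) \<delta> (\<lambda>_. \<sigma>)}"
    by (rule measure_pmf.finite_measure_mono) simp
  then show ?thesis
    using bad measure_pmf.prob_compl[of "\<Union>x\<in>I. Large x" P] by (simp add: P_def Compl_eq_Diff_UNIV)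
qed

subsection \<open>The choice of the constant\<close>

lemma quartic_log_bound:
  fixes l l' :: real
  assumes l: "1/2 \<le> l" and l': "1/2 \<le> l'"
  shows "2 * l' + 2 * l + 2 + l ^ 4 \<le> 500 * (l ^ 4 * l')"
proof -
  have l3: "1/8 \<le> l ^ 3" using power_mono[OF l, of 3] by (simp add: power_divide)
  have l4: "1/16 \<le> l ^ 4" using power_mono[OF l, of 4] by (simp add: power_divide)
  have "1/32 \<le> l ^ 4 * l'" using mult_mono[OF l4 l'] by simp
  moreover have "l' \<le> 16 * (l ^ 4 * l')" using mult_right_mono[OF l4, of l'] l' by simp
  moreover have "l \<le> 16 * (l ^ 4 * l')"
  proof -
    have "l * (1/8) * (1/2) \<le> l * l ^ 3 * l'"
      using l by (intro mult_mono mult_left_mono l3 l') auto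
    then show ?thesis by (simp add: power_Suc[symmetric] algebra_simps)
  qed
  moreover have "l ^ 4 \<le> 2 * (l ^ 4 * l')" using mult_left_mono[OF l', of "l ^ 4"] by simp
  ultimately show ?thesis by linarith
qed

lemma ln_ge_half:
  assumes "2 \<le> x"
  shows "1/2 \<le> ln (x :: real)"
proof -
  have "ln 2 \<le> ln x" using assms by simp
  moreover have "1/2 < ln (2::real)" using ln_add1_gt[of 1] by simp
  ultimately show ?thesis by linarith
qed

lemma union_bound_le_powr_ln_cube:
  fixes \<delta> :: real
  assumes n: "2 \<le> n" and N: "2 \<le> N" and "1 \<le> \<sigma>" and "0 < \<delta>"
    and m: "real m \<ge> 2000 * real \<sigma> * \<delta> powr (-2) * (ln (real n)) ^ 4 * ln (real N)"
  shows "4 * (real N * real n)\<^sup>2 * exp (- ((\<delta> / real (min \<sigma> n))\<^sup>2 * real m * (real n)\<^sup>2 / 8))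
    \<le> real n powr (- ((ln (real n)) ^ 3))"
proof -
  define l where "l = ln (real n)"
  define l' where "l' = ln (real N)"
  define L where "L = l ^ 4 * l'"
  define s where "s = real (min \<sigma> n)"
  have l: "1/2 \<le> l" and l': "1/2 \<le> l'"
    using ln_ge_half[of "real n"] ln_ge_half[of "real N"] n N by (simp_all add: l_def l'_def)
  have "0 < L" using l l' by (simp add: L_def)
  have "1 \<le> s" using assms(3) n by (simp add: s_def)
  have s_sq: "s\<^sup>2 \<le> real \<sigma> * real n"
    by (simp add: s_def power2_eq_square mult_mono)
  have \<delta>_m: "2000 * real \<sigma> * L \<le> \<delta>\<^sup>2 * real m"
  proof -
    have "\<delta>\<^sup>2 * (2000 * real \<sigma> * (1 / \<delta>\<^sup>2) * l ^ 4 * l') \<le> \<delta>\<^sup>2 * real m"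
      using m \<open>0 < \<delta>\<close> by (intro mult_left_mono) (auto simp: powr_neg_numeral l_def l'_def)
    then show ?thesis using \<open>0 < \<delta>\<close> by (simp add: L_def field_simps)
  qed
  have "2000 * L * real n * s\<^sup>2 \<le> 2000 * real \<sigma> * L * (real n)\<^sup>2"
    using mult_left_mono[OF s_sq, of "2000 * L * real n"] \<open>0 < L\<close>
    by (simp add: power2_eq_square mult_ac)
  also have "\<dots> \<le> \<delta>\<^sup>2 * real m * (real n)\<^sup>2"
    using \<delta>_m by (simp add: mult_right_mono)
  finally have "2000 * L * real n \<le> \<delta>\<^sup>2 * real m * (real n)\<^sup>2 / s\<^sup>2"
    using \<open>1 \<le> s\<close> by (simp add: pos_le_divide_eq)
  moreover have "4000 * L \<le> 2000 * L * real n"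
    using n \<open>0 < L\<close> by simp
  moreover have "\<delta>\<^sup>2 * real m * (real n)\<^sup>2 / s\<^sup>2 = (\<delta> / s)\<^sup>2 * real m * (real n)\<^sup>2"
    by (simp add: power_divide)
  ultimately have exponent: "500 * L \<le> (\<delta> / s)\<^sup>2 * real m * (real n)\<^sup>2 / 8"
    by linarith
  have "exp (2 * l) = (real n)\<^sup>2" "exp (2 * l') = (real N)\<^sup>2"
    using exp_of_nat_mult[of 2 l] exp_of_nat_mult[of 2 l'] n N by (simp_all add: l_def l'_def)
  moreover have "(4::real) \<le> exp 2"
  proof -
    have "(4::real) = exp (2 * ln 2)" using exp_of_nat_mult[of 2 "ln (2::real)"] by simp
    also have "\<dots> \<le> exp 2" using ln_2_less_1 by simp
    finally show ?thesis .
  qed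
  ultimately have "4 * (real N * real n)\<^sup>2 \<le> exp (2 + 2 * l' + 2 * l)"
    by (simp add: exp_add power_mult_distrib mult.assoc mult_right_mono)
  then have "4 * (real N * real n)\<^sup>2 * exp (- ((\<delta> / s)\<^sup>2 * real m * (real n)\<^sup>2 / 8))
      \<le> exp (2 + 2 * l' + 2 * l) * exp (- (500 * L))"
    using exponent by (intro mult_mono) auto
  also have "\<dots> \<le> exp (- (l ^ 4))"
    using quartic_log_bound[OF l l'] by (simp add: L_def flip: exp_add)
  also have "\<dots> = real n powr (- ((ln (real n)) ^ 3))"
    using n by (simp add: l_def powr_def power3_eq_cube power4_eq_xxxx)
  finally show ?thesis by (simp add: s_def)
qed

theorem proposition1:
  shows "\<exists>C::real. C > 0 \<and>
    (\<forall>(n::nat) (N::nat) (m::nat) (\<sigma>::nat) (\<delta>::real).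
       0 < n \<longrightarrow> 0 < \<delta> \<longrightarrow> \<delta> < 1 \<longrightarrow>
       real m \<ge> C * real \<sigma> * \<delta> powr (-2) * (ln (real n)) ^ 4 * ln (real N) \<longrightarrow>
       measure_pmf.prob (sample_space n N m)
         {\<omega>. pairwise_incoherent N m (\<lambda>_. n) (subsampled_dft n m \<omega>) \<delta> (\<lambda>_. \<sigma>)}
       \<ge> 1 - real n powr (- ((ln (real n)) ^ 3)))"
proof (intro exI[of _ 2000] conjI allI impI)
  fix n N m \<sigma> :: nat and \<delta> :: real
  assume n: "0 < n" and \<delta>: "0 < \<delta>" "\<delta> < 1"
    and m: "real m \<ge> 2000 * real \<sigma> * \<delta> powr (-2) * (ln (real n)) ^ 4 * ln (real N)"
  let ?E = "{\<omega>. pairwise_incoherent N m (\<lambda>_. n) (subsampled_dft n m \<omega>) \<delta> (\<lambda>_. \<sigma>)}"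
  consider "n = 1" | "N < 2 \<or> \<sigma> = 0" | "2 \<le> n" "2 \<le> N" "1 \<le> \<sigma>"
    using n by linarith
  then show "measure_pmf.prob (sample_space n N m) ?E \<ge> 1 - real n powr (- ((ln (real n)) ^ 3))"
  proof cases
    case 2
    then have "?E = UNIV"
      by (cases "\<sigma> = 0")
        (simp_all add: pairwise_incoherent_zero_sparsity, auto simp: pairwise_incoherent_def)
    then show ?thesis by simp
  next
    case 3
    define t where "t = \<delta> / real (min \<sigma> n)"
    have "t * real (min \<sigma> n) = \<delta>" using 3 by (simp add: t_def)
    then show ?thesis
      using prob_pairwise_incoherent_subsampled_dft_ge[OF n, of t \<sigma> \<delta> N m]
        union_bound_le_powr_ln_cube[OF 3 \<delta>(1) m] \<delta>(1)
      by (simp add: t_def)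
  qed simp
qed simp

end
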